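(* Let $(X,d,\phi)$ be a flow. Then \begin{align*} \overline{\mathrm{mdim}}_M(\phi,X,d)&=\limsup_{\epsilon\to0}\frac{1}{\log\frac1\epsilon}\sup_{x\in X}h_d(x,\epsilon,\phi),\\ \underline{\mathrm{mdim}}_M(\phi,X,d)&=\liminf_{\epsilon\to0}\frac{1}{\log\frac1\epsilon}\sup_{x\in X}h_d(x,\epsilon,\phi). \end{align*}
   Context: A flow $(X,d,\phi)$: $(X,d)$ compact metric, $\phi:X\times\mathbb{R}\to X$ continuous, $\phi_t(x)=\phi(x,t)$, $\phi_0=\mathrm{id}$, $\phi_{t+s}=\phi_t\circ\phi_s$. Let $d_t(x,y)=\max_{s\in[0,t]}d(\phi_sx,\phi_sy)$. For $Z\subset X$, $r_t(\phi,Z,d,\epsilon)$ is the minimal cardinality of a set $E\subset X$ such that every $x\in Z$ has some $y\in E$ with $d_t(x,y)<\epsilon$, and $r(\phi,Z,d,\epsilon)=\limsup_{t\to\infty}\frac1t\log r_t(\phi,Z,d,\epsilon)$. $\overline{\mathrm{mdim}}_M(\phi,X,d)=\limsup_{\epsilon\to0}\frac{r(\phi,X,d,\epsilon)}{\log(1/\epsilon)}$, $\underline{\mathrm{mdim}}_M(\phi,X,d)=\liminf_{\epsilon\to0}\frac{r(\phi,X,d,\epsilon)}{\log(1/\epsilon)}$. The local entropy function is $h_d(x,\epsilon,\phi)=\inf\{r(\phi,K,d,\epsilon):K \text{ a closed neighborhood of } x\}$. *)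

theory Defs
  imports "HOL-Analysis.Analysis"
begin

definition is_flow :: "'a set \<Rightarrow> ('a \<Rightarrow> 'a \<Rightarrow> real) \<Rightarrow> (real \<Rightarrow> 'a \<Rightarrow> 'a) \<Rightarrow> bool" where
  "is_flow X d phi \<longleftrightarrow>
     Metric_space X d \<and>
     compact_space (Metric_space.mtopology X d) \<and>
     continuous_map (prod_topology (Metric_space.mtopology X d) euclideanreal)
                    (Metric_space.mtopology X d) (\<lambda>(x, t). phi t x) \<and>
     (\<forall>x\<in>X. phi 0 x = x) \<and>
     (\<forall>x\<in>X. \<forall>t s. phi (t + s) x = phi t (phi s x))"

definition bowen_dist :: "('a \<Rightarrow> 'a \<Rightarrow> real) \<Rightarrow> (real \<Rightarrow> 'a \<Rightarrow> 'a) \<Rightarrow> real \<Rightarrow> 'a \<Rightarrow> 'a \<Rightarrow> real" where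
  "bowen_dist d phi t x y = (SUP s\<in>{0..t}. d (phi s x) (phi s y))"

definition span_num :: "'a set \<Rightarrow> ('a \<Rightarrow> 'a \<Rightarrow> real) \<Rightarrow> (real \<Rightarrow> 'a \<Rightarrow> 'a) \<Rightarrow> 'a set \<Rightarrow> real \<Rightarrow> real \<Rightarrow> nat" where
  "span_num X d phi Z eps t =
     (LEAST n. \<exists>E. finite E \<and> E \<subseteq> X \<and> card E = n \<and>
                 (\<forall>x\<in>Z. \<exists>y\<in>E. bowen_dist d phi t x y < eps))"

definition span_rate :: "'a set \<Rightarrow> ('a \<Rightarrow> 'a \<Rightarrow> real) \<Rightarrow> (real \<Rightarrow> 'a \<Rightarrow> 'a) \<Rightarrow> 'a set \<Rightarrow> real \<Rightarrow> ereal" where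
  "span_rate X d phi Z eps =
     Limsup at_top (\<lambda>t. ereal (ln (real (span_num X d phi Z eps t)) / t))"

definition upper_mdim_M :: "'a set \<Rightarrow> ('a \<Rightarrow> 'a \<Rightarrow> real) \<Rightarrow> (real \<Rightarrow> 'a \<Rightarrow> 'a) \<Rightarrow> ereal" where
  "upper_mdim_M X d phi =
     Limsup (at_right 0) (\<lambda>eps. span_rate X d phi X eps / ereal (ln (1 / eps)))"

definition lower_mdim_M :: "'a set \<Rightarrow> ('a \<Rightarrow> 'a \<Rightarrow> real) \<Rightarrow> (real \<Rightarrow> 'a \<Rightarrow> 'a) \<Rightarrow> ereal" where
  "lower_mdim_M X d phi =
     Liminf (at_right 0) (\<lambda>eps. span_rate X d phi X eps / ereal (ln (1 / eps)))"

definition local_entropy :: "'a set \<Rightarrow> ('a \<Rightarrow> 'a \<Rightarrow> real) \<Rightarrow> (real \<Rightarrow> 'a \<Rightarrow> 'a) \<Rightarrow> 'a \<Rightarrow> real \<Rightarrow> ereal" where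
  "local_entropy X d phi x eps =
     (INF K\<in>{K. closedin (Metric_space.mtopology X d) K \<and>
               x \<in> (Metric_space.mtopology X d) interior_of K}. span_rate X d phi K eps)"

end

theory Submission
  imports Defs
begin

text \<open>For each fixed \<open>eps > 0\<close> the spanning rate of the whole space already equals
  \<open>sup\<^sub>x h\<^sub>d(x, eps, phi)\<close>, so the two limits in the definitions of the mean dimensions coincide.
  One inequality holds because \<open>X\<close> is a closed neighbourhood of each of its points. For the
  other, any bound above the supremum is beaten by the rate of some closed neighbourhood of each
  point; by compactness finitely many of them cover \<open>X\<close>, spanning numbers are subadditive over
  such a cover, and the exponential growth rate of a finite sum is the largest growth rate of
  its summands.\<close>

lemma compact_space_finite_point_cover:
  assumes "compact_space T" "\<And>x. x \<in> topspace T \<Longrightarrow> openin T (U x) \<and> x \<in> U x"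
  obtains D where "finite D" "D \<subseteq> topspace T" "topspace T \<subseteq> (\<Union>x\<in>D. U x)"
proof -
  have "\<exists>\<F>. finite \<F> \<and> \<F> \<subseteq> U ` topspace T \<and> topspace T \<subseteq> \<Union>\<F>"
    using assms unfolding compact_space_def by (intro compactinD) auto
  then obtain \<F> where \<F>: "finite \<F>" "\<F> \<subseteq> U ` topspace T" "topspace T \<subseteq> \<Union>\<F>"
    by blast
  then obtain D where "D \<subseteq> topspace T" "finite D" "\<F> = U ` D"
    by (meson finite_subset_image)
  with \<F> show ?thesis using that by auto
qed

lemma ln_of_nat_nonneg: "0 \<le> ln (real n)"
  by (cases "n = 0") (auto intro: ln_ge_zero)

lemma ln_of_nat_mult_le: "ln (real (m * n)) \<le> ln (real m) + ln (real n)"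
  by (cases "m = 0 \<or> n = 0") (auto simp: ln_mult ln_of_nat_nonneg)

lemma ln_of_nat_mono: "m \<le> n \<Longrightarrow> ln (real m) \<le> ln (real n)"
  by (cases "m = 0") (auto simp: ln_of_nat_nonneg)

lemma ln_sum_le_ln_card_add_ln_Max:
  assumes "finite D" "D \<noteq> {}"
  shows "ln (real (\<Sum>i\<in>D. g i)) \<le> ln (real (card D)) + ln (real (Max (g ` D)))"
proof -
  have "(\<Sum>i\<in>D. g i) \<le> card D * Max (g ` D)"
    using sum_bounded_above[of D g "Max (g ` D)"] assms(1) by auto
  then show ?thesis
    using ln_of_nat_mono ln_of_nat_mult_le order_trans by blast
qed

definition growth_rate :: "(real \<Rightarrow> nat) \<Rightarrow> ereal" where
  "growth_rate f = Limsup at_top (\<lambda>t. ereal (ln (real (f t)) / t))"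

lemma span_rate_eq_growth_rate: "span_rate X d phi Z eps = growth_rate (span_num X d phi Z eps)"
  by (simp add: span_rate_def growth_rate_def)

lemma growth_rate_mono:
  assumes "eventually (\<lambda>t. f t \<le> g t) at_top"
  shows "growth_rate f \<le> growth_rate g"
  unfolding growth_rate_def
proof (rule Limsup_mono)
  show "eventually (\<lambda>t. ereal (ln (real (f t)) / t) \<le> ereal (ln (real (g t)) / t)) at_top"
    using assms eventually_gt_at_top[of 0]
    by eventually_elim (simp add: divide_right_mono ln_of_nat_mono)
qed

lemma growth_rate_sum_le:
  assumes "finite D" "D \<noteq> {}"
  shows "growth_rate (\<lambda>t. \<Sum>i\<in>D. f i t) \<le> (SUP i\<in>D. growth_rate (f i))"
  unfolding growth_rate_def[of "\<lambda>t. \<Sum>i\<in>D. f i t"] Limsup_le_iff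
proof (intro allI impI)
  fix y assume y: "(SUP i\<in>D. growth_rate (f i)) < y"
  obtain b where b: "(SUP i\<in>D. growth_rate (f i)) < ereal b" "ereal b < y"
    using ereal_dense2[OF y] by blast
  show "eventually (\<lambda>t. ereal (ln (real (\<Sum>i\<in>D. f i t)) / t) < y) at_top"
  proof (cases y)
    case (real c)
    have "((\<lambda>t. ln (real (card D)) / t) \<longlongrightarrow> 0) at_top"
      by (intro tendsto_divide_0[OF tendsto_const] filterlim_at_top_imp_at_infinity filterlim_ident)
    then have small_card: "eventually (\<lambda>t. ln (real (card D)) / t < c - b) at_top"
      using b real by (intro order_tendstoD(2)) auto
    have summands: "eventually (\<lambda>t. \<forall>i\<in>D. ln (real (f i t)) / t < b) at_top"
    proof (intro eventually_ball_finite[OF assms(1)] ballI)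
      fix i assume "i \<in> D"
      then have "growth_rate (f i) < ereal b"
        using b by (meson SUP_upper le_less_trans)
      then show "eventually (\<lambda>t. ln (real (f i t)) / t < b) at_top"
        unfolding growth_rate_def by (auto dest: Limsup_lessD)
    qed
    show ?thesis
      using small_card summands eventually_gt_at_top[of 0]
    proof eventually_elim
      case (elim t)
      define M where "M = Max ((\<lambda>i. f i t) ` D)"
      have "M \<in> (\<lambda>i. f i t) ` D"
        unfolding M_def using assms by (intro Max_in) auto
      then have "ln (real M) / t < b" using elim(2) by auto
      have "ln (real (\<Sum>i\<in>D. f i t)) \<le> ln (real (card D)) + ln (real M)"
        unfolding M_def using assms by (rule ln_sum_le_ln_card_add_ln_Max)
      then have "ln (real (\<Sum>i\<in>D. f i t)) / t \<le> ln (real (card D)) / t + ln (real M) / t"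
        using elim(3) by (simp add: divide_right_mono flip: add_divide_distrib)
      with elim(1) \<open>ln (real M) / t < b\<close> show ?case
        using real by simp
    qed
  qed (use b in auto)
qed

definition spans :: "'a set \<Rightarrow> ('a \<Rightarrow> 'a \<Rightarrow> real) \<Rightarrow> (real \<Rightarrow> 'a \<Rightarrow> 'a) \<Rightarrow> real \<Rightarrow> real \<Rightarrow>
    'a set \<Rightarrow> 'a set \<Rightarrow> bool" where
  "spans X d phi t eps Z E \<longleftrightarrow>
     finite E \<and> E \<subseteq> X \<and> (\<forall>x\<in>Z. \<exists>y\<in>E. bowen_dist d phi t x y < eps)"

lemma span_num_eq_Least: "span_num X d phi Z eps t = (LEAST n. \<exists>E. spans X d phi t eps Z E \<and> card E = n)"
  unfolding span_num_def spans_def by (intro arg_cong[where f = Least] ext) blast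

lemma span_num_le_card: "spans X d phi t eps Z E \<Longrightarrow> span_num X d phi Z eps t \<le> card E"
  unfolding span_num_eq_Least by (rule Least_le) blast

lemma spans_minimal:
  assumes "spans X d phi t eps Z E"
  obtains E' where "spans X d phi t eps Z E'" "card E' = span_num X d phi Z eps t"
  using LeastI[of "\<lambda>n. \<exists>E. spans X d phi t eps Z E \<and> card E = n" "card E"] assms that
  unfolding span_num_eq_Least by blast

lemma spans_subset: "spans X d phi t eps Z E \<Longrightarrow> Z' \<subseteq> Z \<Longrightarrow> spans X d phi t eps Z' E"
  unfolding spans_def by blast

lemma span_num_UN_le:
  assumes "finite D" "spans X d phi t eps X E" "\<And>i. i \<in> D \<Longrightarrow> K i \<subseteq> X"
    and "Z \<subseteq> (\<Union>i\<in>D. K i)"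
  shows "span_num X d phi Z eps t \<le> (\<Sum>i\<in>D. span_num X d phi (K i) eps t)"
proof -
  have "\<exists>F. spans X d phi t eps (K i) F \<and> card F = span_num X d phi (K i) eps t" if "i \<in> D" for i
    using spans_subset[OF assms(2) assms(3)[OF that]] by (metis spans_minimal)
  then obtain F where F: "\<And>i. i \<in> D \<Longrightarrow> spans X d phi t eps (K i) (F i)"
      "\<And>i. i \<in> D \<Longrightarrow> card (F i) = span_num X d phi (K i) eps t"
    by metis
  have "spans X d phi t eps Z (\<Union>i\<in>D. F i)"
    unfolding spans_def
  proof (intro conjI ballI)
    show "finite (\<Union>i\<in>D. F i)" "(\<Union>i\<in>D. F i) \<subseteq> X"
      using F(1) assms(1) by (auto simp: spans_def)
    fix z assume "z \<in> Z"
    then obtain i where "i \<in> D" "z \<in> K i"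
      using assms(4) by blast
    with F(1) show "\<exists>y\<in>(\<Union>i\<in>D. F i). bowen_dist d phi t z y < eps"
      unfolding spans_def by blast
  qed
  then have "span_num X d phi Z eps t \<le> card (\<Union>i\<in>D. F i)"
    by (rule span_num_le_card)
  also have "\<dots> \<le> (\<Sum>i\<in>D. card (F i))"
    using assms(1) by (rule card_UN_le)
  finally show ?thesis
    using F(2) by simp
qed

lemma flow_in_space:
  assumes "is_flow X d phi" "x \<in> X"
  shows "phi t x \<in> X"
proof -
  interpret Metric_space X d using assms(1) by (simp add: is_flow_def)
  have "continuous_map (prod_topology mtopology euclideanreal) mtopology (\<lambda>(x, t). phi t x)"
    using assms(1) by (simp add: is_flow_def)
  from continuous_map_image_subset_topspace[OF this] show ?thesis
    using assms(2) by auto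
qed

lemma flow_dist_continuous_map:
  assumes "is_flow X d phi" "y \<in> X"
  shows "continuous_map (prod_topology (Metric_space.mtopology X d) euclideanreal) euclideanreal
           (\<lambda>(x, s). d (phi s x) (phi s y))"
proof -
  interpret Metric_space X d using assms(1) by (simp add: is_flow_def)
  have flow: "continuous_map (prod_topology mtopology euclideanreal) (mtopology_of (metric (X, d)))
      (\<lambda>p. phi (snd p) (fst p))"
    using assms(1) by (simp add: is_flow_def case_prod_beta')
  have "continuous_map (prod_topology mtopology euclideanreal) (prod_topology mtopology euclideanreal)
      (\<lambda>p. (y, snd p))"
    using assms(2) by (intro continuous_map_pairedI) (auto intro: continuous_map_snd)
  from continuous_map_compose[OF this flow]
  have "continuous_map (prod_topology mtopology euclideanreal) (mtopology_of (metric (X, d)))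
      (\<lambda>p. phi (snd p) y)"
    by (simp add: o_def)
  from continuous_map_mdist[OF flow this] show ?thesis
    by (simp add: case_prod_beta')
qed

text \<open>Since \<open>[0, t]\<close> is compact, the tube lemma turns continuity of \<open>d (phi s x) (phi s y)\<close>
  in \<open>(x, s)\<close> into a bound on the Bowen distance that is uniform in \<open>s \<in> [0, t]\<close>.\<close>
lemma bowen_dist_lt_neighbourhood:
  assumes flow: "is_flow X d phi" and "eps > 0" "t \<ge> 0" "y \<in> X"
  shows "\<exists>U. openin (Metric_space.mtopology X d) U \<and> y \<in> U \<and>
    (\<forall>x\<in>U. bowen_dist d phi t x y < eps)"
proof -
  interpret Metric_space X d using flow by (simp add: is_flow_def)
  define W where "W = {p \<in> topspace (prod_topology mtopology euclideanreal).
                          (\<lambda>(x, s). d (phi s x) (phi s y)) p \<in> {..<eps / 2}}"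
  have W: "openin (prod_topology mtopology euclideanreal) W"
    unfolding W_def
    by (rule openin_continuous_map_preimage[OF flow_dist_continuous_map[OF flow \<open>y \<in> X\<close>]]) simp
  have "{y} \<times> {0..t} \<subseteq> W"
    unfolding W_def using flow_in_space[OF flow] \<open>y \<in> X\<close> \<open>eps > 0\<close> by auto
  then obtain U V where UV: "openin mtopology U" "openin euclideanreal V" "y \<in> U"
      "{0..t} \<subseteq> V" "U \<times> V \<subseteq> W"
    using tube_lemma_right[OF W _ _ \<open>{y} \<times> {0..t} \<subseteq> W\<close>] \<open>y \<in> X\<close> by auto
  have bound: "bowen_dist d phi t x y \<le> eps / 2" if "x \<in> U" for x
    unfolding bowen_dist_def
  proof (rule cSUP_least)
    fix s assume "s \<in> {0..t}"
    with UV that have "(x, s) \<in> W" by blast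
    then show "d (phi s x) (phi s y) \<le> eps / 2" unfolding W_def by simp
  qed (use \<open>t \<ge> 0\<close> in simp)
  have "\<forall>x\<in>U. bowen_dist d phi t x y < eps"
  proof
    fix x assume "x \<in> U"
    from bound[OF this] \<open>eps > 0\<close> show "bowen_dist d phi t x y < eps" by linarith
  qed
  with UV(1,3) show ?thesis by blast
qed

lemma flow_spans_exists:
  assumes flow: "is_flow X d phi" and "eps > 0" "t \<ge> 0"
  obtains E where "spans X d phi t eps X E"
proof -
  interpret Metric_space X d using flow by (simp add: is_flow_def)
  have "\<forall>y\<in>X. \<exists>U. openin mtopology U \<and> y \<in> U \<and> (\<forall>x\<in>U. bowen_dist d phi t x y < eps)"
    using bowen_dist_lt_neighbourhood[OF flow \<open>eps > 0\<close> \<open>t \<ge> 0\<close>] ..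
  from bchoice[OF this] obtain U where U: "\<forall>y\<in>X. openin mtopology (U y) \<and> y \<in> U y \<and>
      (\<forall>x\<in>U y. bowen_dist d phi t x y < eps)"
    by blast
  have "compact_space mtopology"
    using flow by (simp add: is_flow_def)
  then obtain D where D: "finite D" "D \<subseteq> X" "X \<subseteq> (\<Union>y\<in>D. U y)"
    by (rule compact_space_finite_point_cover[of mtopology U]) (use U in auto)
  have "spans X d phi t eps X D"
    unfolding spans_def
  proof (intro conjI ballI)
    fix x assume "x \<in> X"
    then obtain y where "y \<in> D" "x \<in> U y"
      using D(3) by blast
    with U D(2) show "\<exists>y\<in>D. bowen_dist d phi t x y < eps"
      by blast
  qed (use D in auto)
  then show ?thesis by (rule that)
qed

lemma span_rate_UN_le:
  assumes flow: "is_flow X d phi" and "eps > 0" "finite D" "D \<noteq> {}"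
    and "\<And>i. i \<in> D \<Longrightarrow> K i \<subseteq> X" "Z \<subseteq> (\<Union>i\<in>D. K i)"
  shows "span_rate X d phi Z eps \<le> (SUP i\<in>D. span_rate X d phi (K i) eps)"
proof -
  have "eventually (\<lambda>t. span_num X d phi Z eps t \<le> (\<Sum>i\<in>D. span_num X d phi (K i) eps t)) at_top"
    using eventually_ge_at_top[of 0]
  proof eventually_elim
    case (elim t)
    obtain E where "spans X d phi t eps X E"
      using flow_spans_exists[OF flow \<open>eps > 0\<close> elim] .
    then show ?case
      by (rule span_num_UN_le[OF \<open>finite D\<close> _ assms(5,6)])
  qed
  then have "span_rate X d phi Z eps \<le> growth_rate (\<lambda>t. \<Sum>i\<in>D. span_num X d phi (K i) eps t)"
    unfolding span_rate_eq_growth_rate by (rule growth_rate_mono)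
  also have "\<dots> \<le> (SUP i\<in>D. span_rate X d phi (K i) eps)"
    unfolding span_rate_eq_growth_rate using assms(3,4) by (rule growth_rate_sum_le)
  finally show ?thesis .
qed

lemma span_rate_le_SUP_local_entropy:
  assumes flow: "is_flow X d phi" and "X \<noteq> {}" "eps > 0"
  shows "span_rate X d phi X eps \<le> (SUP x\<in>X. local_entropy X d phi x eps)"
proof (rule dense_ge)
  interpret Metric_space X d using flow by (simp add: is_flow_def)
  fix y assume y: "(SUP x\<in>X. local_entropy X d phi x eps) < y"
  have "\<forall>x\<in>X. \<exists>K. closedin mtopology K \<and> x \<in> mtopology interior_of K \<and> span_rate X d phi K eps < y"
  proof
    fix x assume "x \<in> X"
    with y have "local_entropy X d phi x eps < y"
      by (meson SUP_upper le_less_trans)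
    then show "\<exists>K. closedin mtopology K \<and> x \<in> mtopology interior_of K \<and> span_rate X d phi K eps < y"
      unfolding local_entropy_def INF_less_iff by auto
  qed
  from bchoice[OF this] obtain K where K: "\<forall>x\<in>X. closedin mtopology (K x) \<and>
      x \<in> mtopology interior_of (K x) \<and> span_rate X d phi (K x) eps < y"
    by blast
  have "compact_space mtopology"
    using flow by (simp add: is_flow_def)
  then obtain D where D: "finite D" "D \<subseteq> X" "X \<subseteq> (\<Union>x\<in>D. mtopology interior_of (K x))"
    by (rule compact_space_finite_point_cover[of mtopology "\<lambda>x. mtopology interior_of (K x)"])
       (use K in auto)
  have KX: "K x \<subseteq> X" if "x \<in> D" for x
    using K D(2) that closedin_subset[of mtopology "K x"] by auto
  have cover: "X \<subseteq> (\<Union>x\<in>D. K x)"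
    using D(3) UN_mono[OF order.refl interior_of_subset] by (rule order_trans)
  with \<open>X \<noteq> {}\<close> have "D \<noteq> {}"
    by auto
  have "span_rate X d phi X eps \<le> (SUP x\<in>D. span_rate X d phi (K x) eps)"
    using span_rate_UN_le[OF flow \<open>eps > 0\<close> D(1) \<open>D \<noteq> {}\<close> KX cover] .
  also have "\<dots> \<le> y"
  proof (rule SUP_least)
    fix x assume "x \<in> D"
    with K D(2) show "span_rate X d phi (K x) eps \<le> y"
      by (meson less_imp_le subsetD)
  qed
  finally show "span_rate X d phi X eps \<le> y" .
qed

lemma SUP_local_entropy_le_span_rate:
  assumes "is_flow X d phi"
  shows "(SUP x\<in>X. local_entropy X d phi x eps) \<le> span_rate X d phi X eps"
proof (rule SUP_least)
  interpret Metric_space X d using assms by (simp add: is_flow_def)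
  fix x assume "x \<in> X"
  then show "local_entropy X d phi x eps \<le> span_rate X d phi X eps"
    unfolding local_entropy_def using interior_of_topspace[of mtopology] by (intro INF_lower) auto
qed

lemma span_rate_eq_SUP_local_entropy:
  assumes "is_flow X d phi" "X \<noteq> {}" "eps > 0"
  shows "span_rate X d phi X eps = (SUP x\<in>X. local_entropy X d phi x eps)"
  using span_rate_le_SUP_local_entropy[OF assms] SUP_local_entropy_le_span_rate[OF assms(1)]
  by (rule antisym)

theorem theorem1p4:
  fixes X :: "'a set" and d :: "'a \<Rightarrow> 'a \<Rightarrow> real" and phi :: "real \<Rightarrow> 'a \<Rightarrow> 'a"
  assumes "is_flow X d phi" and "X \<noteq> {}"
  shows "upper_mdim_M X d phi =
           Limsup (at_right 0) (\<lambda>eps. (SUP x\<in>X. local_entropy X d phi x eps) / ereal (ln (1 / eps))) \<and>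
         lower_mdim_M X d phi =
           Liminf (at_right 0) (\<lambda>eps. (SUP x\<in>X. local_entropy X d phi x eps) / ereal (ln (1 / eps)))"
proof -
  have "eventually (\<lambda>eps. span_rate X d phi X eps / ereal (ln (1 / eps)) =
      (SUP x\<in>X. local_entropy X d phi x eps) / ereal (ln (1 / eps))) (at_right (0::real))"
    using eventually_at_right_less[of 0]
    by eventually_elim (simp add: span_rate_eq_SUP_local_entropy[OF assms])
  from Limsup_eq[OF this] Liminf_eq[OF this] show ?thesis
    unfolding upper_mdim_M_def lower_mdim_M_def by simp
qed

end
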